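(* There is an absolute constant $C$ such that for every odd prime $p$ and all integers $m,D\ge1$ with $n=Dm+1$, the state $$|\psi\rangle=\Big(\big(M_{m,\pi/p}^\dagger\big)^{\otimes D}\otimes e^{-i\pi X/4}\Big)H^{\otimes n}|\mathrm{GHZ}_n\rangle,$$ measured in the computational basis, yields a distribution $P_\psi$ on $\{0,1\}^{n-1}\times\{0,1\}$ with $$\Delta\big(P_\psi,(X,\mathrm{majmod}_p(X)\oplus\mathrm{parity}(X))\big)\le\tfrac12-\tfrac1\pi+\tfrac1{2p}+Cp^{3/2}e^{-n/p^2},$$ $X$ uniform on $\{0,1\}^{n-1}$.
   Context: $|\mathrm{GHZ}_n\rangle=(|0^n\rangle+|1^n\rangle)/\sqrt2$; $H$ Hadamard; $X$ Pauli-$X$. $M_{m,\theta}$ is the $m$-qubit operator with $M_{m,\theta}|x_1\cdots x_m\rangle=\bigotimes_{j=1}^m e^{-i\theta x_{j-1}X}|x_j\rangle$ (indices mod $m$, $x_0=x_m$); the $D$ copies act on consecutive blocks of $m$ qubits among the first $n-1$. Measurement of a nonzero vector gives outcome $z$ with probability $|\langle z|\psi\rangle|^2/\|\psi\|^2$. $\mathrm{parity}(x)=|x|\bmod2$; $\mathrm{majmod}_p(x)=0$ if $(|x|\bmod p)<p/2$, else $1$. $\Delta$ is total variation distance. *)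

theory Defs
  imports Complex_Main "HOL-Computational_Algebra.Primes"
begin

text \<open>Computational basis states of n qubits are bit strings (bool lists) of length n;
  qubit j is list position j (0-indexed). An n-qubit operator is given by its matrix
  entries A y x = <y|A|x>; a state is an amplitude function on bit strings.\<close>

definition bits :: "nat \<Rightarrow> bool list set" where
  "bits n = {x. length x = n}"

definition apply_op :: "nat \<Rightarrow> (bool list \<Rightarrow> bool list \<Rightarrow> complex) \<Rightarrow> (bool list \<Rightarrow> complex)
    \<Rightarrow> bool list \<Rightarrow> complex" where
  "apply_op n A \<psi> y = (\<Sum>x\<in>bits n. A y x * \<psi> x)"

definition ghz :: "nat \<Rightarrow> bool list \<Rightarrow> complex" where
  "ghz n x = (if x = replicate n False \<or> x = replicate n True
              then complex_of_real (1 / sqrt 2) else 0)"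

definition bitval :: "bool \<Rightarrow> real" where
  "bitval b = (if b then 1 else 0)"

definition hadamard :: "bool \<Rightarrow> bool \<Rightarrow> complex" where
  "hadamard c a = complex_of_real ((if c \<and> a then -1 else 1) / sqrt 2)"

text \<open>exp(-i theta X) = cos theta I - i sin theta X.\<close>
definition expX :: "real \<Rightarrow> bool \<Rightarrow> bool \<Rightarrow> complex" where
  "expX \<theta> c a = (if c = a then complex_of_real (cos \<theta>) else - \<i> * complex_of_real (sin \<theta>))"

definition tensor_pow :: "nat \<Rightarrow> (bool \<Rightarrow> bool \<Rightarrow> complex) \<Rightarrow> bool list \<Rightarrow> bool list \<Rightarrow> complex" where
  "tensor_pow n G y x = (\<Prod>j<n. G (y ! j) (x ! j))"

text \<open>M_{m,theta}|x_1..x_m> = tensor_j exp(-i theta x_{j-1} X)|x_j>, indices cyclic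
  (0-indexed: control of qubit j is qubit (j-1) mod m).\<close>
definition M_op :: "nat \<Rightarrow> real \<Rightarrow> bool list \<Rightarrow> bool list \<Rightarrow> complex" where
  "M_op m \<theta> y x = (\<Prod>j<m. expX (\<theta> * bitval (x ! ((j + m - 1) mod m))) (y ! j) (x ! j))"

definition dagger :: "(bool list \<Rightarrow> bool list \<Rightarrow> complex) \<Rightarrow> bool list \<Rightarrow> bool list \<Rightarrow> complex" where
  "dagger A y x = cnj (A x y)"

text \<open>A^{tensor D} on D consecutive blocks of m qubits, tensored with single-qubit G on
  the last qubit (index D*m).\<close>
definition blocks_op :: "nat \<Rightarrow> nat \<Rightarrow> (bool list \<Rightarrow> bool list \<Rightarrow> complex)
    \<Rightarrow> (bool \<Rightarrow> bool \<Rightarrow> complex) \<Rightarrow> bool list \<Rightarrow> bool list \<Rightarrow> complex" where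
  "blocks_op D m A G y x =
     (\<Prod>k<D. A (take m (drop (k * m) y)) (take m (drop (k * m) x))) * G (y ! (D * m)) (x ! (D * m))"

definition psi :: "nat \<Rightarrow> nat \<Rightarrow> nat \<Rightarrow> bool list \<Rightarrow> complex" where
  "psi p m D = (let n = D * m + 1 in
     apply_op n (blocks_op D m (dagger (M_op m (pi / real p))) (expX (pi / 4)))
       (apply_op n (tensor_pow n hadamard) (ghz n)))"

definition meas_prob :: "nat \<Rightarrow> (bool list \<Rightarrow> complex) \<Rightarrow> bool list \<Rightarrow> real" where
  "meas_prob n \<psi> z = (cmod (\<psi> z))\<^sup>2 / (\<Sum>w\<in>bits n. (cmod (\<psi> w))\<^sup>2)"

definition hw :: "bool list \<Rightarrow> nat" where
  "hw x = length (filter id x)"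

definition parity :: "bool list \<Rightarrow> bool" where
  "parity x = odd (hw x)"

definition majmod :: "nat \<Rightarrow> bool list \<Rightarrow> bool" where
  "majmod p x = (\<not> (real (hw x mod p) < real p / 2))"

text \<open>Distribution of (X, majmod_p(X) xor parity(X)) with X uniform on {0,1}^{n-1},
  as a distribution on strings z of length n (first n-1 bits = X, last bit = second component).\<close>
definition target_dist :: "nat \<Rightarrow> nat \<Rightarrow> bool list \<Rightarrow> real" where
  "target_dist p n z = (if z ! (n - 1) = (majmod p (take (n - 1) z) \<noteq> parity (take (n - 1) z))
                        then 1 / 2 ^ (n - 1) else 0)"

definition tv_dist :: "nat \<Rightarrow> (bool list \<Rightarrow> real) \<Rightarrow> (bool list \<Rightarrow> real) \<Rightarrow> real" where
  "tv_dist n P Q = (1 / 2) * (\<Sum>z\<in>bits n. \<bar>P z - Q z\<bar>)"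

end

theory Submission
  imports Defs
begin

text \<open>The measured distribution can be computed exactly. The amplitude of H^n GHZ_n at x is
  proportional to 1 + (-1)^|x|, and the operator applied to it is a product of single-qubit
  X-rotations whose angles are controlled by a permutation of the qubits (each qubit by its cyclic
  predecessor within its block). Summing over x therefore leaves only the two products of
  h_i(0) + h_i(1) and h_i(0) - h_i(1), and one finds
  P(x, b) = 2^-(n-1) (1 + s sin (2 pi |x| / p)) / 2, where s = 1 if b = parity x and s = -1
  otherwise. Hence the distance equals 1/2 - 2^-n sum_x g(|x| mod p), where
  g(r) = sin (2 pi r / p) for r < p/2 and g(r) = - sin (2 pi r / p) otherwise.

  Discrete Fourier analysis on Z/p shows that the number of x with |x| = r (mod p) differs from
  2^(n-1)/p by at most (2 cos (pi/p))^(n-1). Together with sum_(r<p) g(r) = cot (pi / 2p)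
  \<ge> 2p/pi - 1 and cos (pi/p) \<le> 1 - 1/p^2 this yields the bound with C = 2.\<close>

section \<open>Bit strings and Hamming weight\<close>

lemma finite_bits [simp]: "finite (bits n)"
  using finite_lists_length_eq[of "UNIV :: bool set" n] by (simp add: bits_def)

lemma card_bits: "card (bits n) = 2 ^ n"
  using card_lists_length_eq[of "UNIV :: bool set" n] by (simp add: bits_def)

lemma bits_Suc: "bits (Suc n) = (\<lambda>(x, b). x @ [b]) ` (bits n \<times> UNIV)"
proof
  show "bits (Suc n) \<subseteq> (\<lambda>(x, b). x @ [b]) ` (bits n \<times> UNIV)"
  proof
    fix z assume "z \<in> bits (Suc n)"
    hence "length z = Suc n" by (simp add: bits_def)
    hence "z = butlast z @ [last z]" and "butlast z \<in> bits n"
      by (auto simp: bits_def intro: append_butlast_last_id[symmetric])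
    thus "z \<in> (\<lambda>(x, b). x @ [b]) ` (bits n \<times> UNIV)" by force
  qed
qed (auto simp: bits_def)

lemma sum_bits_snoc:
  "(\<Sum>z\<in>bits (Suc n). f z) = (\<Sum>x\<in>bits n. f (x @ [False]) + f (x @ [True]))"
proof -
  have "inj_on (\<lambda>(x, b). x @ [b]) (bits n \<times> (UNIV :: bool set))"
    by (auto simp: inj_on_def)
  hence "(\<Sum>z\<in>bits (Suc n). f z) = (\<Sum>(x, b)\<in>bits n \<times> UNIV. f (x @ [b]))"
    unfolding bits_Suc by (simp add: sum.reindex case_prod_beta')
  also have "\<dots> = (\<Sum>x\<in>bits n. f (x @ [False]) + f (x @ [True]))"
    by (simp add: sum.cartesian_product[symmetric] UNIV_bool)
  finally show ?thesis .
qed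

lemma sum_bits_prod_nth:
  fixes h :: "nat \<Rightarrow> bool \<Rightarrow> 'a::comm_semiring_1"
  shows "(\<Sum>x\<in>bits n. \<Prod>j<n. h j (x ! j)) = (\<Prod>j<n. h j False + h j True)"
proof (induction n)
  case 0
  have "bits 0 = {[]}" by (auto simp: bits_def)
  thus ?case by simp
next
  case (Suc n)
  have snoc: "(\<Prod>j<Suc n. h j ((x @ [b]) ! j)) = (\<Prod>j<n. h j (x ! j)) * h n b"
    if "x \<in> bits n" for x b
    using that by (auto simp: bits_def nth_append intro!: prod.cong)
  have "(\<Sum>x\<in>bits (Suc n). \<Prod>j<Suc n. h j (x ! j))
      = (\<Sum>x\<in>bits n. (\<Prod>j<n. h j (x ! j)) * (h n False + h n True))"
    unfolding sum_bits_snoc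
    by (rule sum.cong) (simp_all del: prod.lessThan_Suc add: snoc distrib_left)
  also have "\<dots> = (\<Prod>j<Suc n. h j False + h j True)"
    by (simp add: sum_distrib_right[symmetric] Suc.IH)
  finally show ?case .
qed

lemma hw_snoc [simp]: "hw (x @ [b]) = hw x + (if b then 1 else 0)"
  by (simp add: hw_def)

lemma prod_nth_if_eq_power_hw:
  "(\<Prod>j<length x. if x ! j then z else 1) = (z :: 'a::comm_monoid_mult) ^ hw x"
proof (induction x rule: rev_induct)
  case (snoc b x)
  have "(\<Prod>j<length x. if (x @ [b]) ! j then z else 1) = (\<Prod>j<length x. if x ! j then z else 1)"
    by (rule prod.cong) (auto simp: nth_append)
  thus ?case using snoc by (simp add: power_add)
qed (simp add: hw_def)

lemma sum_bitval_nth_eq_hw: "(\<Sum>j<length x. bitval (x ! j)) = real (hw x)"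
proof (induction x rule: rev_induct)
  case (snoc b x)
  have "(\<Sum>j<length x. bitval ((x @ [b]) ! j)) = (\<Sum>j<length x. bitval (x ! j))"
    by (rule sum.cong) (auto simp: nth_append)
  thus ?case using snoc by (simp add: bitval_def)
qed (simp add: hw_def)

lemma sum_bits_power_hw: "(\<Sum>x\<in>bits n. z ^ hw x) = (1 + z :: 'a::comm_semiring_1) ^ n"
proof -
  have "(\<Sum>x\<in>bits n. z ^ hw x) = (\<Sum>x\<in>bits n. \<Prod>j<n. if x ! j then z else 1)"
    by (rule sum.cong) (auto simp: bits_def simp flip: prod_nth_if_eq_power_hw)
  also have "\<dots> = (1 + z) ^ n"
    using sum_bits_prod_nth[of "\<lambda>j a. if a then z else 1" n] by (simp add: add.commute)
  finally show ?thesis .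
qed

section \<open>The measured distribution\<close>

lemma (in comm_monoid_set) lessThan_mult_blocks:
  fixes g :: "nat \<Rightarrow> 'a"
  shows "F g {..<n * k} = F (\<lambda>i. F (\<lambda>j. g (i * k + j)) {..<k}) {..<n}"
proof -
  have "F (\<lambda>j. g (i * k + j)) {..<k} = F g {i * k..<i * k + k}" for i
    using shift_bounds_nat_ivl[of g 0 "i * k" k] by (simp add: atLeast0LessThan add.commute)
  thus ?thesis by (simp add: nat_group)
qed

text \<open>In M_{m,\<theta>}^{\<otimes>D}, qubit i is controlled by block_pred m i, its cyclic predecessor within
  its block of m consecutive qubits.\<close>
definition block_pred :: "nat \<Rightarrow> nat \<Rightarrow> nat" where
  "block_pred m i = i div m * m + (i mod m + m - 1) mod m"

lemma block_pred_in_block: "j < m \<Longrightarrow> block_pred m (k * m + j) = k * m + (j + m - 1) mod m"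
  by (simp add: block_pred_def)

lemma sum_cyclic_pred:
  fixes m :: nat
  assumes "m \<ge> 1"
  shows "(\<Sum>j<m. g ((j + m - 1) mod m)) = (\<Sum>j<m. g j :: 'a::comm_monoid_add)"
proof -
  obtain m' where m': "m = Suc m'" using assms by (cases m) auto
  have pred_Suc: "(Suc j + m - 1) mod m = j" if "j < m'" for j
  proof -
    have "Suc j + m - 1 = j + m" using m' by simp
    thus ?thesis using that m' mod_add_self2[of j m] by simp
  qed
  have "(\<Sum>j<m. g ((j + m - 1) mod m)) = g m' + (\<Sum>j<m'. g ((Suc j + m - 1) mod m))"
    unfolding m' sum.lessThan_Suc_shift by simp
  also have "\<dots> = (\<Sum>j<m. g j)"
    using pred_Suc by (simp add: m' add.commute)
  finally show ?thesis .
qed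

lemma sum_block_pred:
  assumes "m \<ge> 1"
  shows "(\<Sum>i<D * m. f (block_pred m i)) = (\<Sum>i<D * m. f i :: 'a::comm_monoid_add)"
proof -
  have "(\<Sum>j<m. f (block_pred m (k * m + j))) = (\<Sum>j<m. f (k * m + j))" for k
    using sum_cyclic_pred[OF assms, of "\<lambda>j. f (k * m + j)"] by (simp add: block_pred_in_block)
  thus ?thesis by (simp add: sum.lessThan_mult_blocks)
qed

lemma hadamard_ghz:
  assumes "n \<ge> 1" and "x \<in> bits n"
  shows "apply_op n (tensor_pow n hadamard) (ghz n) x
           = complex_of_real ((1 / sqrt 2) ^ (n + 1)) * (1 + (-1) ^ hw x)"
proof -
  let ?r = "complex_of_real (1 / sqrt 2)"
  let ?H = "tensor_pow n hadamard x"
  have len: "length x = n" using assms(2) by (simp add: bits_def)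
  have distinct: "replicate n False \<noteq> replicate n True" using assms(1) by (cases n) auto
  have "apply_op n (tensor_pow n hadamard) (ghz n) x
          = (\<Sum>z\<in>{replicate n False, replicate n True}. ?H z * ghz n z)"
    unfolding apply_op_def
    by (rule sum.mono_neutral_right[OF finite_bits]) (auto simp: bits_def ghz_def)
  also have "\<dots> = ?r * (?H (replicate n False) + ?H (replicate n True))"
    using distinct by (simp add: ghz_def algebra_simps)
  also have "?H (replicate n False) = ?r ^ n"
    by (simp add: tensor_pow_def hadamard_def)
  also have "?H (replicate n True) = (\<Prod>j<n. ?r * (if x ! j then -1 else 1))"
    unfolding tensor_pow_def by (rule prod.cong) (auto simp: hadamard_def)
  also have "\<dots> = ?r ^ n * (-1) ^ hw x"
    unfolding prod.distrib prod_constant card_lessThan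
    using prod_nth_if_eq_power_hw[of x "-1 :: complex"] len by simp
  finally show ?thesis by (simp add: algebra_simps add_divide_distrib)
qed

lemma sum_product_op_hadamard_ghz:
  fixes h :: "nat \<Rightarrow> bool \<Rightarrow> complex"
  assumes "n \<ge> 1"
  shows "(\<Sum>x\<in>bits n. (\<Prod>i<n. h i (x ! i)) * apply_op n (tensor_pow n hadamard) (ghz n) x)
           = complex_of_real ((1 / sqrt 2) ^ (n + 1))
               * ((\<Prod>i<n. h i False + h i True) + (\<Prod>i<n. h i False - h i True))"
proof -
  let ?k = "complex_of_real ((1 / sqrt 2) ^ (n + 1))"
  have "(\<Prod>i<n. h i (x ! i)) * apply_op n (tensor_pow n hadamard) (ghz n) x
          = ?k * ((\<Prod>i<n. h i (x ! i)) + (\<Prod>i<n. h i (x ! i) * (if x ! i then -1 else 1)))"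
    if "x \<in> bits n" for x
  proof -
    have "(\<Prod>i<n. if x ! i then -1 else 1) = (-1 :: complex) ^ hw x"
      using that prod_nth_if_eq_power_hw[of x] by (simp add: bits_def)
    hence "(\<Prod>i<n. h i (x ! i) * (if x ! i then -1 else 1)) = (\<Prod>i<n. h i (x ! i)) * (-1) ^ hw x"
      by (simp add: prod.distrib)
    then show ?thesis
      unfolding hadamard_ghz[OF assms that] by (simp add: algebra_simps add_divide_distrib)
  qed
  hence "(\<Sum>x\<in>bits n. (\<Prod>i<n. h i (x ! i)) * apply_op n (tensor_pow n hadamard) (ghz n) x)
          = ?k * ((\<Sum>x\<in>bits n. \<Prod>i<n. h i (x ! i))
                  + (\<Sum>x\<in>bits n. \<Prod>i<n. h i (x ! i) * (if x ! i then -1 else 1)))"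
    unfolding sum.distrib[symmetric] sum_distrib_left by (rule sum.cong[OF refl])
  also have "\<dots> = ?k * ((\<Prod>i<n. h i False + h i True) + (\<Prod>i<n. h i False - h i True))"
    using sum_bits_prod_nth[of h n] sum_bits_prod_nth[of "\<lambda>i a. h i a * (if a then -1 else 1)" n]
    by simp
  finally show ?thesis .
qed

lemma blocks_op_dagger_M:
  assumes "y \<in> bits (D * m + 1)" and "x \<in> bits (D * m + 1)"
  shows "blocks_op D m (dagger (M_op m \<theta>)) G y x
           = (\<Prod>i<D * m. cnj (expX (\<theta> * bitval (y ! block_pred m i)) (x ! i) (y ! i)))
               * G (y ! (D * m)) (x ! (D * m))"
proof -
  define F where "F i = cnj (expX (\<theta> * bitval (y ! block_pred m i)) (x ! i) (y ! i))" for i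
  have block: "dagger (M_op m \<theta>) (take m (drop (k * m) y)) (take m (drop (k * m) x))
                 = (\<Prod>j<m. F (k * m + j))" if "k < D" for k
  proof -
    have "k * m + m \<le> D * m" using mult_le_mono1[of "Suc k" D m] that by simp
    hence "k * m \<le> length y" "k * m \<le> length x" using assms by (auto simp: bits_def)
    thus ?thesis
      unfolding dagger_def M_op_def cnj_prod F_def
      by (intro prod.cong) (auto simp: block_pred_in_block)
  qed
  show ?thesis
    unfolding blocks_op_def prod.lessThan_mult_blocks[of F D m] F_def[symmetric]
    by (simp add: block)
qed

lemma prod_cis: "(\<Prod>i\<in>A. cis (f i)) = cis (\<Sum>i\<in>A. f i)"
  by (induction A rule: infinite_finite_induct) (auto simp: cis_mult)

lemma expX_add: "expX t c False + expX t c True = cis (- t)"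
  and expX_diff: "expX t c False - expX t c True = (if c then -1 else 1) * cis t"
  and cnj_expX_add: "cnj (expX t False c) + cnj (expX t True c) = cis t"
  and cnj_expX_diff: "cnj (expX t False c) - cnj (expX t True c) = (if c then -1 else 1) * cis (- t)"
  by (auto simp: expX_def complex_eq_iff)

lemma sum_bitval_block_pred_snoc:
  assumes "m \<ge> 1" and "x \<in> bits (D * m)"
  shows "(\<Sum>i<D * m. bitval ((x @ [b]) ! block_pred m i)) = real (hw x)"
proof -
  have "length x = D * m" using assms(2) by (simp add: bits_def)
  hence "(\<Sum>i<D * m. bitval ((x @ [b]) ! i)) = real (hw x)"
    using sum_bitval_nth_eq_hw[of x] by (simp add: nth_append)
  thus ?thesis using sum_block_pred[OF assms(1), of "\<lambda>j. bitval ((x @ [b]) ! j)" D] by simp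
qed

lemma psi_snoc:
  fixes p m D :: nat
  assumes "m \<ge> 1" and "x \<in> bits (D * m)"
  defines "\<beta> \<equiv> pi * real (hw x) / real p - pi / 4"
  shows "psi p m D (x @ [b]) = complex_of_real ((1 / sqrt 2) ^ (D * m + 2))
           * (cis \<beta> + (if b = parity x then 1 else -1) * cis (- \<beta>))"
proof -
  define N where "N = D * m"
  define y where "y = x @ [b]"
  define \<theta> where "\<theta> = pi / real p"
  define t where "t i = \<theta> * bitval (y ! block_pred m i)" for i
  \<comment> \<open>h i a is the entry (row y_i, column a) of the factor of the final operator on qubit i\<close>
  define h where "h i a = (if i < N then cnj (expX (t i) a (y ! i)) else expX (pi / 4) b a)" for i a
  have len: "length x = N" using assms(2) by (simp add: bits_def N_def)
  have y_nth: "y ! i = x ! i" if "i < N" for i using that len by (simp add: y_def nth_append)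
  have "y ! N = b" unfolding y_def len[symmetric] by simp
  hence "blocks_op D m (dagger (M_op m \<theta>)) (expX (pi / 4)) y z = (\<Prod>i<N + 1. h i (z ! i))"
    if "z \<in> bits (N + 1)" for z
    using blocks_op_dagger_M[of y D m z \<theta>] that len
    by (simp add: bits_def y_def N_def h_def t_def)
  hence "psi p m D y = (\<Sum>z\<in>bits (N + 1). (\<Prod>i<N + 1. h i (z ! i))
                          * apply_op (N + 1) (tensor_pow (N + 1) hadamard) (ghz (N + 1)) z)"
    unfolding psi_def Let_def apply_op_def[of "D * m + 1" "blocks_op _ _ _ _"]
    by (simp add: N_def \<theta>_def)
  also have "\<dots> = complex_of_real ((1 / sqrt 2) ^ (N + 2))
      * ((\<Prod>i<N + 1. h i False + h i True) + (\<Prod>i<N + 1. h i False - h i True))"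
    by (subst sum_product_op_hadamard_ghz) simp_all
  also have "(\<Prod>i<N + 1. h i False + h i True) = cis (\<theta> * hw x) * cis (- (pi / 4))"
    using sum_bitval_block_pred_snoc[OF assms(1,2), of b, folded y_def N_def]
    by (simp add: h_def t_def cnj_expX_add expX_add prod_cis flip: sum_distrib_left)
  also have "(\<Prod>i<N + 1. h i False - h i True)
      = (-1) ^ hw x * cis (- (\<theta> * hw x)) * ((if b then -1 else 1) * cis (pi / 4))"
  proof -
    have "(\<Prod>i<N. if y ! i then -1 else 1) = (-1 :: complex) ^ hw x"
      using prod_nth_if_eq_power_hw[of x] len by (simp add: y_nth)
    thus ?thesis
      using sum_bitval_block_pred_snoc[OF assms(1,2), of b, folded y_def N_def]
      by (simp add: h_def t_def cnj_expX_diff expX_diff prod.distrib prod_cis sum_negf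
          flip: sum_distrib_left)
  qed
  finally show ?thesis
    unfolding y_def N_def
    by (cases b; cases "even (hw x)") (simp_all add: cis_mult \<beta>_def \<theta>_def parity_def algebra_simps)
qed

lemma norm_cis_add_sign_cis_sq:
  "(cmod (cis \<beta> + (if c then 1 else -1) * cis (- \<beta>)))\<^sup>2
     = 2 * (1 + (if c then 1 else -1) * cos (2 * \<beta>))"
proof (cases c)
  case True
  have "cis \<beta> + cis (- \<beta>) = complex_of_real (2 * cos \<beta>)" by (simp add: complex_eq_iff)
  thus ?thesis using True by (simp add: cos_double_cos power_mult_distrib)
next
  case False
  have "cis \<beta> - cis (- \<beta>) = \<i> * complex_of_real (2 * sin \<beta>)" by (simp add: complex_eq_iff)
  thus ?thesis using False by (simp add: norm_mult cos_double_sin power_mult_distrib)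
qed

lemma psi_snoc_norm_sq:
  assumes "m \<ge> 1" and "x \<in> bits (D * m)"
  shows "(cmod (psi p m D (x @ [b])))\<^sup>2
           = (1 / 2) ^ (D * m) * (1 + (if b = parity x then 1 else -1) * sin (2 * pi * hw x / p)) / 2"
proof -
  define \<beta> where "\<beta> = pi * real (hw x) / real p - pi / 4"
  have "((1 / sqrt 2) ^ (D * m + 2))\<^sup>2 = ((1 / sqrt 2)\<^sup>2) ^ (D * m + 2)"
    by (simp only: power_mult[symmetric] mult.commute)
  hence "((1 / sqrt 2) ^ (D * m + 2))\<^sup>2 = (1 / 2 :: real) ^ (D * m + 2)"
    by (simp add: power_divide)
  moreover have "cos (2 * \<beta>) = sin (2 * pi * hw x / p)"
    by (simp add: \<beta>_def right_diff_distrib cos_diff mult.assoc)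
  ultimately show ?thesis
    unfolding psi_snoc[OF assms, of p b, folded \<beta>_def] norm_mult norm_of_real power_mult_distrib
      norm_cis_add_sign_cis_sq
    by (simp add: field_simps)
qed

lemma sum_norm_sq_psi:
  assumes "m \<ge> 1"
  shows "(\<Sum>w\<in>bits (D * m + 1). (cmod (psi p m D w))\<^sup>2) = 1"
proof -
  have "(cmod (psi p m D (x @ [False])))\<^sup>2 + (cmod (psi p m D (x @ [True])))\<^sup>2 = (1 / 2) ^ (D * m)"
    if "x \<in> bits (D * m)" for x
    by (cases "parity x") (simp_all add: psi_snoc_norm_sq[OF assms that] field_simps)
  thus ?thesis
    unfolding Suc_eq_plus1[symmetric] sum_bits_snoc by (simp add: card_bits power_one_over)
qed

lemma meas_prob_psi:
  assumes "m \<ge> 1" and "x \<in> bits (D * m)"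
  shows "meas_prob (D * m + 1) (psi p m D) (x @ [b])
           = (1 / 2) ^ (D * m) * (1 + (if b = parity x then 1 else -1) * sin (2 * pi * hw x / p)) / 2"
  unfolding meas_prob_def sum_norm_sq_psi[OF assms(1)] psi_snoc_norm_sq[OF assms] by simp

section \<open>Distance to the target distribution\<close>

text \<open>Conditional on the first D m bits being x, the circuit outputs
  majmod_p(x) \<oplus> parity(x) with probability (1 + majmod_bias p (|x| mod p)) / 2.\<close>
definition majmod_bias :: "nat \<Rightarrow> nat \<Rightarrow> real" where
  "majmod_bias p r = (if real r < real p / 2 then 1 else -1) * sin (2 * pi * real r / real p)"

lemma sin_two_pi_div_mod:
  assumes "p > 0"
  shows "sin (2 * pi * real w / real p) = sin (2 * pi * real (w mod p) / real p)"
proof -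
  have "real w = real p * real (w div p) + real (w mod p)"
    by (metis div_mult_mod_eq of_nat_add of_nat_mult mult.commute)
  hence "2 * pi * real w / real p = 2 * pi * real (w mod p) / real p + 2 * pi * of_int (w div p)"
    using assms by (simp add: field_simps)
  thus ?thesis by (simp only: sin_add sin_int_2pin cos_int_2pin)
qed

lemma tv_terms_snoc:
  assumes "m \<ge> 1" and "p > 0" and "x \<in> bits (D * m)"
  shows "\<bar>meas_prob (D * m + 1) (psi p m D) (x @ [False]) - target_dist p (D * m + 1) (x @ [False])\<bar>
       + \<bar>meas_prob (D * m + 1) (psi p m D) (x @ [True]) - target_dist p (D * m + 1) (x @ [True])\<bar>
       = (1 / 2) ^ (D * m) * (1 - majmod_bias p (hw x mod p))"
proof -
  define h :: real where "h = (1 / 2) ^ (D * m)"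
  define g where "g = majmod_bias p (hw x mod p)"
  define c where "c = (majmod p x \<noteq> parity x)"
  let ?P = "\<lambda>b. meas_prob (D * m + 1) (psi p m D) (x @ [b])"
  let ?Q = "\<lambda>b. target_dist p (D * m + 1) (x @ [b])"
  have g_eq: "g = (if majmod p x then -1 else 1) * sin (2 * pi * hw x / p)"
    unfolding g_def majmod_bias_def majmod_def sin_two_pi_div_mod[OF assms(2), of "hw x", symmetric]
    by simp
  hence "\<bar>g\<bar> \<le> 1" by (simp add: abs_mult)
  have P: "?P c = h * (1 + g) / 2" "?P (\<not> c) = h * (1 - g) / 2"
    unfolding meas_prob_psi[OF assms(1,3)] g_eq h_def c_def by (cases "majmod p x"; simp)+
  have Q: "?Q c = h" "?Q (\<not> c) = 0"
    using assms(3) by (simp_all add: target_dist_def c_def h_def bits_def nth_append power_one_over)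
  have "0 \<le> h * (1 - g) / 2"
    using \<open>\<bar>g\<bar> \<le> 1\<close> by (simp add: h_def)
  hence abs_eq: "\<bar>h * (1 + g) / 2 - h\<bar> = h * (1 - g) / 2"
                "\<bar>h * (1 - g) / 2 - 0\<bar> = h * (1 - g) / 2"
    by (simp_all add: abs_minus_commute algebra_simps)
  have "\<bar>?P False - ?Q False\<bar> + \<bar>?P True - ?Q True\<bar>
          = \<bar>?P c - ?Q c\<bar> + \<bar>?P (\<not> c) - ?Q (\<not> c)\<bar>"
    by (cases c) simp_all
  also have "\<dots> = h * (1 - g)"
    unfolding P Q abs_eq by simp
  finally show ?thesis unfolding h_def g_def .
qed

lemma tv_dist_psi:
  assumes "m \<ge> 1" and "p > 0"
  shows "tv_dist (D * m + 1) (meas_prob (D * m + 1) (psi p m D)) (target_dist p (D * m + 1))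
           = 1 / 2 - (\<Sum>x\<in>bits (D * m). majmod_bias p (hw x mod p)) / 2 ^ (D * m + 1)"
proof -
  let ?F = "\<lambda>z. \<bar>meas_prob (D * m + 1) (psi p m D) z - target_dist p (D * m + 1) z\<bar>"
  have "(\<Sum>z\<in>bits (Suc (D * m)). ?F z) = (\<Sum>x\<in>bits (D * m). ?F (x @ [False]) + ?F (x @ [True]))"
    by (rule sum_bits_snoc)
  also have "\<dots> = (\<Sum>x\<in>bits (D * m). (1 / 2) ^ (D * m) * (1 - majmod_bias p (hw x mod p)))"
    by (rule sum.cong[OF refl], rule tv_terms_snoc[OF assms])
  also have "\<dots> = (1 / 2) ^ (D * m) * (2 ^ (D * m) - (\<Sum>x\<in>bits (D * m). majmod_bias p (hw x mod p)))"
    by (simp add: sum_subtractf card_bits flip: sum_distrib_left)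
  finally show ?thesis
    unfolding tv_dist_def Suc_eq_plus1 by (simp add: power_one_over right_diff_distrib)
qed

section \<open>Hamming weight modulo p\<close>

lemma sum_cis_two_pi_multiples:
  fixes j :: int
  assumes "p > 0"
  shows "(\<Sum>k<p. cis (2 * pi * real k * of_int j / real p)) = (if int p dvd j then of_nat p else 0)"
proof -
  define \<omega> where "\<omega> = cis (2 * pi * j / p)"
  have powers: "cis (2 * pi * real k * of_int j / real p) = \<omega> ^ k" for k
    by (simp add: \<omega>_def DeMoivre field_simps)
  show ?thesis
  proof (cases "int p dvd j")
    case True
    then obtain q where "j = int p * q" by blast
    hence "2 * pi * of_int j / real p = 2 * pi * of_int q" using assms by simp
    hence "\<omega> = cis (2 * pi * of_int q)" by (simp only: \<omega>_def)
    hence "\<omega> = 1" by (metis Ints_of_int cis_multiple_2pi)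
    thus ?thesis using True by (simp add: powers)
  next
    case False
    have "\<omega> \<noteq> 1"
    proof
      assume "\<omega> = 1"
      hence "cos (2 * pi * j / p) = 1" by (simp add: \<omega>_def complex_eq_iff)
      then obtain q :: int where "2 * pi * j / p = q * 2 * pi" by (auto simp: cos_one_2pi_int)
      hence "real_of_int j = real_of_int (q * int p)" using assms by (simp add: field_simps)
      hence "j = q * int p" by (simp only: of_int_eq_iff)
      thus False using False by simp
    qed
    moreover have "\<omega> ^ p = 1" using assms by (simp add: \<omega>_def DeMoivre)
    ultimately show ?thesis using False by (simp add: powers geometric_sum)
  qed
qed

lemma card_hw_mod_eq:
  assumes "r < p"
  shows "of_nat (card {x \<in> bits n. hw x mod p = r})
           = (\<Sum>k<p. cis (- 2 * pi * real k * real r / real p)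
                        * (1 + cis (2 * pi * real k / real p)) ^ n) / of_nat p"
proof -
  have p: "p > 0" using assms by simp
  have indicator: "of_bool (hw x mod p = r)
      = (\<Sum>k<p. cis (- 2 * pi * real k * real r / real p) * cis (2 * pi * real k / real p) ^ hw x)
          / of_nat p" for x
  proof -
    have "hw x mod p = r \<longleftrightarrow> int (hw x) mod int p = int r mod int p"
      using assms by (metis mod_less of_nat_eq_iff of_nat_mod)
    also have "\<dots> \<longleftrightarrow> int p dvd int (hw x) - int r" by (rule mod_eq_dvd_iff)
    finally have "of_bool (hw x mod p = r)
        = (\<Sum>k<p. cis (2 * pi * real k * of_int (int (hw x) - int r) / real p)) / of_nat p"
      unfolding sum_cis_two_pi_multiples[OF p] using p by simp
    moreover have "- 2 * pi * real k * real r / real p + real (hw x) * (2 * pi * real k / real p)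
                     = 2 * pi * real k * of_int (int (hw x) - int r) / real p" for k :: nat
      using p by (simp add: field_simps)
    ultimately show ?thesis by (simp only: DeMoivre cis_mult)
  qed
  have "{x \<in> bits n. hw x mod p = r} = bits n \<inter> {x. hw x mod p = r}" by blast
  hence "of_nat (card {x \<in> bits n. hw x mod p = r}) = (\<Sum>x\<in>bits n. of_bool (hw x mod p = r) :: complex)"
    by simp
  also have "\<dots> = (\<Sum>k<p. cis (- 2 * pi * real k * real r / real p)
                             * (\<Sum>x\<in>bits n. cis (2 * pi * real k / real p) ^ hw x)) / of_nat p"
    unfolding indicator sum_divide_distrib[symmetric] sum_distrib_left by (subst sum.swap) (rule refl)
  finally show ?thesis by (simp only: sum_bits_power_hw add.commute)
qed

lemma norm_one_plus_cis: "cmod (1 + cis t) = 2 * \<bar>cos (t / 2)\<bar>"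
proof -
  have "1 + cis t = cis (t / 2) * complex_of_real (2 * cos (t / 2))"
    using cos_double_cos[of "t / 2"] sin_double[of "t / 2"]
    by (simp add: complex_eq_iff algebra_simps power2_eq_square)
  thus ?thesis by (simp add: norm_mult)
qed

lemma abs_cos_le_cos:
  assumes "0 \<le> a" and "a \<le> s" and "s \<le> pi - a"
  shows "\<bar>cos s\<bar> \<le> cos a"
proof -
  have "cos s \<le> cos a" using assms by (subst cos_mono_le_eq) auto
  moreover have "- cos s \<le> cos a"
    using assms cos_mono_le_eq[of "pi - s" a] by simp
  ultimately show ?thesis by linarith
qed

lemma norm_one_plus_root_of_unity_le:
  assumes "1 \<le> k" and "k < p"
  shows "cmod (1 + cis (2 * pi * real k / real p)) \<le> 2 * cos (pi / real p)"
proof -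
  have "pi * (real k + 1) \<le> pi * real p"
    using assms by (intro mult_left_mono) auto
  hence "pi / p \<le> pi * k / p" and "pi * k / p \<le> pi - pi / p"
    using assms by (simp_all add: field_simps)
  hence "\<bar>cos (pi * k / p)\<bar> \<le> cos (pi / p)" by (intro abs_cos_le_cos) auto
  thus ?thesis by (simp add: norm_one_plus_cis)
qed

lemma cos_pi_div_nonneg:
  fixes p :: nat
  assumes "p \<ge> 2"
  shows "0 \<le> cos (pi / p)"
proof -
  have "pi / p \<le> pi / 2" using assms by (intro divide_left_mono) auto
  moreover have "0 \<le> pi / p" by simp
  ultimately show ?thesis using pi_gt_zero by (intro cos_ge_zero) linarith+
qed

lemma card_hw_mod_deviation:
  assumes "p \<ge> 2" and "r < p"
  shows "\<bar>real (card {x \<in> bits n. hw x mod p = r}) - 2 ^ n / p\<bar> \<le> (2 * cos (pi / p)) ^ n"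
proof -
  define c where "c = 2 * cos (pi / p)"
  define a where
    "a k = cis (- 2 * pi * real k * real r / real p) * (1 + cis (2 * pi * real k / real p)) ^ n" for k
  have "0 \<le> c" using cos_pi_div_nonneg[OF assms(1)] by (simp add: c_def)
  have "(\<Sum>k<p. a k) = a 0 + (\<Sum>k\<in>{1..<p}. a k)"
    using assms by (simp add: lessThan_atLeast0 sum.atLeast_Suc_lessThan)
  hence "complex_of_real (real (card {x \<in> bits n. hw x mod p = r}) - 2 ^ n / p)
           = (\<Sum>k\<in>{1..<p}. a k) / of_nat p"
    using card_hw_mod_eq[OF assms(2), of n] assms by (simp add: a_def field_simps)
  hence "\<bar>real (card {x \<in> bits n. hw x mod p = r}) - 2 ^ n / p\<bar> = cmod (\<Sum>k\<in>{1..<p}. a k) / p"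
    by (metis norm_divide norm_of_nat norm_of_real)
  also have "cmod (\<Sum>k\<in>{1..<p}. a k) \<le> (\<Sum>k\<in>{1..<p}. c ^ n)"
  proof (rule order.trans[OF norm_sum sum_mono])
    fix k assume "k \<in> {1..<p}"
    hence "cmod (1 + cis (2 * pi * real k / real p)) \<le> c"
      unfolding c_def by (intro norm_one_plus_root_of_unity_le) auto
    thus "cmod (a k) \<le> c ^ n" by (simp add: a_def norm_mult norm_power power_mono)
  qed
  also have "\<dots> \<le> p * c ^ n" using \<open>0 \<le> c\<close> by (simp add: mult_right_mono)
  finally show ?thesis using assms by (simp add: c_def divide_right_mono)
qed

lemma sum_bits_hw_mod_ge:
  fixes f :: "nat \<Rightarrow> real"
  assumes "p \<ge> 2" and "\<And>r. \<bar>f r\<bar> \<le> 1"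
  shows "(\<Sum>x\<in>bits n. f (hw x mod p)) \<ge> 2 ^ n / p * (\<Sum>r<p. f r) - p * (2 * cos (pi / p)) ^ n"
proof -
  define card_r where "card_r r = real (card {x \<in> bits n. hw x mod p = r})" for r
  have "(\<Sum>x\<in>bits n. f (hw x mod p)) = (\<Sum>r<p. \<Sum>x\<in>{x \<in> bits n. hw x mod p = r}. f (hw x mod p))"
    using assms(1) by (intro sum.group[symmetric]) auto
  also have "\<dots> = (\<Sum>r<p. f r * card_r r)"
    by (simp add: card_r_def mult.commute)
  also have "\<dots> \<ge> (\<Sum>r<p. f r * 2 ^ n / p - (2 * cos (pi / p)) ^ n)"
  proof (rule sum_mono)
    fix r assume "r \<in> {..<p}"
    hence "\<bar>card_r r - 2 ^ n / p\<bar> \<le> (2 * cos (pi / p)) ^ n"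
      unfolding card_r_def by (intro card_hw_mod_deviation assms(1)) auto
    hence "\<bar>f r\<bar> * \<bar>card_r r - 2 ^ n / p\<bar> \<le> 1 * (2 * cos (pi / p)) ^ n"
      using assms(2)[of r] by (intro mult_mono) auto
    hence "\<bar>f r * (card_r r - 2 ^ n / p)\<bar> \<le> (2 * cos (pi / p)) ^ n"
      by (simp add: abs_mult)
    thus "f r * 2 ^ n / p - (2 * cos (pi / p)) ^ n \<le> f r * card_r r"
      by (simp add: abs_le_iff algebra_simps)
  qed
  also have "(\<Sum>r<p. f r * 2 ^ n / p - (2 * cos (pi / p)) ^ n)
      = 2 ^ n / p * (\<Sum>r<p. f r) - p * (2 * cos (pi / p)) ^ n"
    by (simp add: sum_subtractf sum_distrib_right sum_divide_distrib algebra_simps)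
  finally show ?thesis .
qed

section \<open>The bias sum and trigonometric estimates\<close>

lemma abs_majmod_bias_le: "\<bar>majmod_bias p r\<bar> \<le> 1"
  by (simp add: majmod_bias_def abs_mult)

lemma sum_sin_multiples_telescope:
  "(\<Sum>r<n. 2 * sin (x / 2) * sin (real r * x)) = cos (x / 2) - cos ((real n - 1 / 2) * x)"
proof (induction n)
  case (Suc n)
  have "2 * sin (x / 2) * sin (real n * x) = cos (x / 2 - real n * x) - cos (x / 2 + real n * x)"
    by (simp add: mult.assoc sin_times_sin)
  also have "x / 2 - real n * x = - ((real n - 1 / 2) * x)" by (simp add: algebra_simps)
  also have "x / 2 + real n * x = (real (Suc n) - 1 / 2) * x" by (simp add: algebra_simps)
  finally show ?case using Suc by simp
qed simp

lemma sum_majmod_bias: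
  assumes "odd p" and "p \<ge> 3"
  shows "(\<Sum>r<p. majmod_bias p r) = (1 + cos (pi / p)) / sin (pi / p)"
proof -
  define q where "q = p div 2"
  have pq: "p = 2 * q + 1" using assms(1) by (simp add: q_def)
  define x where "x = 2 * pi / p"
  define f where "f r = sin (real r * x)" for r
  have lower_half: "majmod_bias p r = f r" if "r \<le> q" for r
    using that pq by (simp add: majmod_bias_def f_def x_def mult.commute)
  have upper_half: "majmod_bias p (p - s) = f s" if "1 \<le> s" "s \<le> q" for s
  proof -
    have "2 * pi * real (p - s) / real p = 2 * pi - real s * x"
      using that pq by (simp add: x_def field_simps)
    thus ?thesis using that pq by (simp add: majmod_bias_def f_def)
  qed
  have "(\<Sum>r<p. majmod_bias p r) = (\<Sum>r\<in>{0..<q+1}. majmod_bias p r) + (\<Sum>r\<in>{q+1..<p}. majmod_bias p r)"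
    unfolding lessThan_atLeast0 by (rule sum.atLeastLessThan_concat[symmetric]) (use pq in auto)
  also have "(\<Sum>r\<in>{0..<q+1}. majmod_bias p r) = (\<Sum>r<q+1. f r)"
    by (auto simp: lower_half atLeast0LessThan intro!: sum.cong)
  also have "(\<Sum>r\<in>{q+1..<p}. majmod_bias p r) = (\<Sum>s\<in>{1..q}. f s)"
    by (rule sym, rule sum.reindex_bij_witness[of _ "\<lambda>r. p - r" "\<lambda>s. p - s"])
       (use pq upper_half in auto)
  also have "(\<Sum>s\<in>{1..q}. f s) = (\<Sum>r<q+1. f r)"
    by (simp add: f_def sum.atLeast1_atMost_eq lessThan_Suc_atMost sum.atMost_shift)
  finally have sum_eq: "(\<Sum>r<p. majmod_bias p r) = 2 * (\<Sum>r<q+1. f r)" by simp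
  have "2 * sin (x / 2) * (\<Sum>r<q+1. f r) = cos (x / 2) - cos ((real (q + 1) - 1 / 2) * x)"
    unfolding f_def sum_distrib_left by (rule sum_sin_multiples_telescope)
  also have "(real (q + 1) - 1 / 2) * x = pi" using pq by (simp add: x_def field_simps)
  finally have "2 * sin (pi / p) * (\<Sum>r<q+1. f r) = cos (pi / p) + 1" by (simp add: x_def)
  moreover have "sin (pi / p) > 0" using assms(2) by (intro sin_gt_zero) (auto simp: field_simps)
  ultimately show ?thesis unfolding sum_eq by (simp add: field_simps)
qed

lemma one_minus_le_cos:
  fixes y :: real
  assumes "0 \<le> y" and "y \<le> 2"
  shows "1 - y \<le> cos y"
proof -
  have "(sin (y / 2))\<^sup>2 \<le> (y / 2)\<^sup>2"
    using abs_sin_x_le_abs_x[of "y / 2"] assms by (metis abs_le_square_iff)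
  moreover have "y * y \<le> 2 * y" using assms by (intro mult_right_mono) auto
  ultimately show ?thesis
    using cos_double_sin[of "y / 2"] by (simp add: power2_eq_square field_simps)
qed

lemma sum_majmod_bias_ge:
  assumes "odd p" and "p \<ge> 3"
  shows "(\<Sum>r<p. majmod_bias p r) \<ge> 2 * p / pi - 1"
proof -
  define y where "y = pi / p"
  have "0 < y" and "y \<le> 2" using assms(2) pi_less_4 by (auto simp: y_def field_simps)
  have "sin y > 0" using assms(2) by (simp add: y_def sin_gt_zero field_simps)
  have "2 * real p / pi - 1 = (2 - y) / y" using assms(2) by (simp add: y_def field_simps)
  also have "\<dots> \<le> (1 + cos y) / y"
    using one_minus_le_cos[OF less_imp_le[OF \<open>0 < y\<close>] \<open>y \<le> 2\<close>] \<open>0 < y\<close>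
    by (intro divide_right_mono) auto
  also have "\<dots> \<le> (1 + cos y) / sin y"
    using \<open>sin y > 0\<close> sin_x_le_x[OF less_imp_le[OF \<open>0 < y\<close>]] \<open>0 < y\<close> cos_ge_minus_one[of y]
    by (intro divide_left_mono mult_pos_pos) linarith+
  finally show ?thesis unfolding sum_majmod_bias[OF assms] y_def .
qed

lemma sin_ge_cubic:
  assumes "0 \<le> x"
  shows "x - x ^ 3 / 6 \<le> sin (x :: real)"
proof -
  have "\<bar>sin x - (\<Sum>m<3. sin_coeff m * x ^ m)\<bar> \<le> inverse (fact 3) * \<bar>x\<bar> ^ 3"
    by (rule Maclaurin_sin_bound)
  moreover have "(\<Sum>m<3. sin_coeff m * x ^ m) = x"
    by (simp add: eval_nat_numeral sin_coeff_def)
  moreover have "inverse (fact 3) * \<bar>x\<bar> ^ 3 = x ^ 3 / 6"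
    using assms by (simp add: eval_nat_numeral fact_numeral)
  ultimately show ?thesis by linarith
qed

lemma cos_pi_div_le:
  assumes "p \<ge> 3"
  shows "cos (pi / p) \<le> 1 - 1 / (real p)\<^sup>2"
proof -
  define y where "y = pi / (2 * p)"
  have "0 < y" and "y \<le> 67 / 100"
    using assms pi_less_4 by (auto simp: y_def field_simps)
  hence "y\<^sup>2 \<le> (67 / 100)\<^sup>2" by (intro power_mono) auto
  hence "(925 / 1000) * y \<le> y - y ^ 3 / 6"
    using \<open>0 < y\<close> by (simp add: power2_eq_square power3_eq_cube field_simps)
  hence "(925 / 1000) * y \<le> sin y" using sin_ge_cubic[of y] \<open>0 < y\<close> by simp
  hence "((925 / 1000) * y)\<^sup>2 \<le> (sin y)\<^sup>2" using \<open>0 < y\<close> by (intro power_mono) auto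
  moreover have "cos (pi / p) = 1 - 2 * (sin y)\<^sup>2"
    using cos_double_sin[of y] by (simp add: y_def)
  moreover have "4 \<le> pi * pi" using pi_ge_two mult_mono[of 2 pi 2 pi] by simp
  hence "1 / (real p)\<^sup>2 \<le> 2 * ((925 / 1000) * y)\<^sup>2"
    using assms by (simp add: y_def power2_eq_square field_simps)
  ultimately show ?thesis by linarith
qed

lemma cos_pi_div_power_le:
  assumes "p \<ge> 3"
  shows "cos (pi / p) ^ N \<le> exp (- real N / (real p)\<^sup>2)"
proof -
  have "0 \<le> cos (pi / p)" using assms by (intro cos_pi_div_nonneg) simp
  moreover have "cos (pi / p) \<le> exp (- (1 / (real p)\<^sup>2))"
    using cos_pi_div_le[OF assms] exp_ge_add_one_self[of "- (1 / (real p)\<^sup>2)"] by linarith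
  ultimately have "cos (pi / p) ^ N \<le> exp (- (1 / (real p)\<^sup>2)) ^ N" by (simp add: power_mono)
  thus ?thesis by (simp flip: exp_of_nat_mult)
qed

lemma tv_dist_psi_le:
  assumes "odd p" and "p \<ge> 3" and "m \<ge> 1"
  shows "tv_dist (D * m + 1) (meas_prob (D * m + 1) (psi p m D)) (target_dist p (D * m + 1))
           \<le> 1 / 2 - 1 / pi + 1 / (2 * p) + p / 2 * cos (pi / p) ^ (D * m)"
proof -
  define N where "N = D * m"
  define S where "S = (\<Sum>x\<in>bits N. majmod_bias p (hw x mod p))"
  define T where "T = (\<Sum>r<p. majmod_bias p r)"
  have "S \<ge> 2 ^ N / p * T - p * (2 * cos (pi / p)) ^ N"
    unfolding S_def T_def using assms(2) abs_majmod_bias_le by (intro sum_bits_hw_mod_ge) auto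
  hence "S / 2 ^ (N + 1) \<ge> T / (2 * p) - p / 2 * cos (pi / p) ^ N"
    using assms(2) by (simp add: field_simps)
  moreover have "T / (2 * p) \<ge> (2 * real p / pi - 1) / (2 * p)"
    using sum_majmod_bias_ge[OF assms(1,2)] by (simp add: T_def divide_right_mono)
  moreover have "(2 * real p / pi - 1) / (2 * p) = 1 / pi - 1 / (2 * p)"
    using assms(2) by (simp add: field_simps)
  ultimately show ?thesis
    using tv_dist_psi[OF assms(3), of p D] assms(2) by (simp add: N_def S_def)
qed

lemma cos_pi_div_power_tail_le:
  assumes "p \<ge> 3"
  shows "p / 2 * cos (pi / p) ^ N \<le> 2 * p powr (3 / 2) * exp (- real (N + 1) / (real p)\<^sup>2)"
proof -
  define E where "E = exp (- real (N + 1) / (real p)\<^sup>2)"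
  have "exp (1 / (real p)\<^sup>2) \<le> exp 1"
    using assms by (simp add: field_simps)
  hence "exp (1 / (real p)\<^sup>2) \<le> 3" using exp_le by linarith
  have "cos (pi / p) ^ N \<le> exp (1 / (real p)\<^sup>2) * E"
    using cos_pi_div_power_le[OF assms, of N] assms
    by (simp add: E_def add_divide_distrib diff_divide_distrib flip: exp_add)
  also have "\<dots> \<le> 3 * E"
    using \<open>exp (1 / (real p)\<^sup>2) \<le> 3\<close> by (intro mult_right_mono) (auto simp: E_def)
  finally have "p / 2 * cos (pi / p) ^ N \<le> p / 2 * (3 * E)" by (rule mult_left_mono) simp
  moreover have "real p * E \<le> real p powr (3 / 2) * E"
    using assms powr_mono[of 1 "3 / 2" "real p"] by (intro mult_right_mono) (auto simp: E_def)
  moreover have "0 \<le> real p powr (3 / 2) * E" by (simp add: E_def)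
  ultimately show ?thesis unfolding E_def by linarith
qed

theorem corollary4p5:
  shows "\<exists>C::real. \<forall>(p::nat) (m::nat) (D::nat).
           prime p \<and> odd p \<and> m \<ge> 1 \<and> D \<ge> 1 \<longrightarrow>
           (let n = D * m + 1 in
              tv_dist n (meas_prob n (psi p m D)) (target_dist p n)
                \<le> 1/2 - 1/pi + 1 / (2 * real p)
                   + C * real p powr (3/2) * exp (- real n / (real p)\<^sup>2))"
proof (intro exI[of _ 2] allI impI)
  fix p m D :: nat
  assume "prime p \<and> odd p \<and> m \<ge> 1 \<and> D \<ge> 1"
  hence "odd p" and "m \<ge> 1" and "p \<ge> 3"
    using prime_ge_2_nat[of p] by (auto simp: le_less numeral_eq_Suc)
  thus "let n = D * m + 1 in tv_dist n (meas_prob n (psi p m D)) (target_dist p n)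
      \<le> 1/2 - 1/pi + 1 / (2 * real p) + 2 * real p powr (3/2) * exp (- real n / (real p)\<^sup>2)"
    using tv_dist_psi_le[of p m D] cos_pi_div_power_tail_le[of p "D * m"]
    unfolding Let_def by linarith
qed

end
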